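(* Let $j\in\mathbb{N}\cup\{0\}$, $M>0$. Let $\{h_n\}_{n\ge0}$ be the orthonormal Hermite polynomials with respect to $e^{-x^2}$ on $\mathbb{R}$, let $\lambda_n=2n$, $K_n^{(j,j)}(0,0)=\sum_{i=0}^n\big(h_i^{(j)}(0)\big)^2$, and for $n\ge1$ define $$\widetilde\lambda_{j+2n}=\lambda_{j+2n}+M\sum_{i=1}^n(\lambda_{j+2i}-\lambda_{j+2i-2})K_{j+2i-1}^{(j,j)}(0,0).$$ Then: if $j=2r$, $$\lim_{n\to+\infty}\frac{\widetilde\lambda_{2r+2n}}{n^{2r+3/2}}=\frac{M2^{4r+1}}{\pi(r+3/4)(2r+1/2)};$$ if $j=2r+1$, $$\lim_{n\to+\infty}\frac{\widetilde\lambda_{2r+1+2n}}{n^{2r+5/2}}=\frac{M2^{4r+3}}{\pi(r+5/4)(2r+3/2)}.$$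
   Context: Background: $\lambda_n=2n$ are the eigenvalues of the Hermite equation $-y''+2xy'=2ny$, and $\widetilde\lambda_{j+2n}$ are eigenvalues of the differential operator $\mathbf{L}$ having as eigenfunctions the polynomials orthonormal with respect to $(f,g)=\int_{\mathbb{R}} fg\,e^{-x^2}dx+Mf^{(j)}(0)g^{(j)}(0)$. *)

theory Defs
  imports "HOL-Analysis.Analysis" "HOL-Computational_Algebra.Polynomial"
begin

fun hermite_poly :: "nat \<Rightarrow> real poly" where
  "hermite_poly 0 = 1"
| "hermite_poly (Suc 0) = [:0, 2:]"
| "hermite_poly (Suc (Suc n)) =
     [:0, 2:] * hermite_poly (Suc n) - smult (2 * real (Suc n)) (hermite_poly n)"

text \<open>Orthonormal Hermite polynomials w.r.t. exp(-x^2) on the real line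
  (positive leading coefficient): h_n = H_n / sqrt(2^n n! sqrt pi).\<close>
definition orthonormal_hermite :: "nat \<Rightarrow> real poly" where
  "orthonormal_hermite n =
     smult (1 / sqrt (2 ^ n * fact n * sqrt pi)) (hermite_poly n)"

definition hermite_lambda :: "nat \<Rightarrow> real" where
  "hermite_lambda n = 2 * real n"

definition kernel_jj0 :: "nat \<Rightarrow> nat \<Rightarrow> real" where
  "kernel_jj0 j n = (\<Sum>i = 0..n. (poly ((pderiv ^^ j) (orthonormal_hermite i)) 0) ^ 2)"

definition tilde_lambda :: "real \<Rightarrow> nat \<Rightarrow> nat \<Rightarrow> real" where
  "tilde_lambda M j n = hermite_lambda (j + 2 * n)
     + M * (\<Sum>i = 1..n. (hermite_lambda (j + 2 * i) - hermite_lambda (j + 2 * i - 2))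
                          * kernel_jj0 j (j + 2 * i - 1))"

end

theory Submission
  imports Defs "HOL-Real_Asymp.Real_Asymp"
begin

(* Since H_n' = 2n H_(n-1), the j-th derivative of h_(j+2k+1) vanishes at 0, as does that of every
   h_i with i < j, while H_(2k)(0) = (-1)^k (2k)!/k! gives
   h_(j+2k)^(j)(0)^2 = 2^j (j+2k)! / (4^k k!^2 sqrt pi) ~ 4^j k^(j-1/2) / pi
   by the Gamma-function asymptotics of the central binomial coefficient. So K_(j+2i+1)^(j,j)(0,0) is the
   i-th partial sum of these squares, and the eigenvalue gaps lambda_(j+2i) - lambda_(j+2i-2) all equal 4.
   Two applications of Stolz-Cesaro, each raising the exponent of n by one and dividing the constant by
   the new exponent, give tilde_lambda_(j+2n) ~ 4^(j+1) M n^(j+3/2) / (pi (j+1/2) (j+3/2)); writing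
   j = 2r or j = 2r+1 yields the two stated limits. The argument works for every real M. *)

lemma telescoping_increment_bound:
  fixes a b :: "nat \<Rightarrow> real"
  assumes step: "\<And>n. N \<le> n \<Longrightarrow> \<bar>a (Suc n) - a n - L * (b (Suc n) - b n)\<bar> \<le> e * (b (Suc n) - b n)"
    and "N \<le> n"
  shows "\<bar>a n - a N - L * (b n - b N)\<bar> \<le> e * (b n - b N)"
  using \<open>N \<le> n\<close>
proof (induction n rule: dec_induct)
  case (step n)
  have "\<bar>a (Suc n) - a N - L * (b (Suc n) - b N)\<bar>
      \<le> \<bar>a (Suc n) - a n - L * (b (Suc n) - b n)\<bar> + \<bar>a n - a N - L * (b n - b N)\<bar>"
    by (rule order_trans[OF _ abs_triangle_ineq]) (simp add: algebra_simps)
  also have "\<dots> \<le> e * (b (Suc n) - b n) + e * (b n - b N)"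
    using assms(1)[OF step(1)] step(3) by (rule add_mono)
  finally show ?case
    by (simp add: algebra_simps)
qed simp

lemma Stolz_Cesaro:
  fixes a b :: "nat \<Rightarrow> real"
  assumes mono: "\<And>n. b n < b (Suc n)"
    and b_lim: "filterlim b at_top sequentially"
    and ratio_lim: "(\<lambda>n. (a (Suc n) - a n) / (b (Suc n) - b n)) \<longlonglongrightarrow> L"
  shows "(\<lambda>n. a n / b n) \<longlonglongrightarrow> L"
proof (rule tendstoI)
  fix e :: real
  assume "e > 0"
  then obtain N where N: "\<And>n. N \<le> n \<Longrightarrow> \<bar>(a (Suc n) - a n) / (b (Suc n) - b n) - L\<bar> < e / 2"
    using tendstoD[OF ratio_lim, of "e / 2"] by (auto simp: eventually_sequentially dist_real_def)
  have "\<bar>a (Suc n) - a n - L * (b (Suc n) - b n)\<bar> \<le> e / 2 * (b (Suc n) - b n)" if "N \<le> n" for n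
  proof -
    have "b (Suc n) - b n > 0"
      using mono[of n] by simp
    then show ?thesis
      using N[OF that] by (simp add: abs_less_iff field_simps)
  qed
  then have bound: "\<bar>a n - a N - L * (b n - b N)\<bar> \<le> e / 2 * (b n - b N)" if "N \<le> n" for n
    using telescoping_increment_bound that by blast
  define C where "C = \<bar>a N - L * b N\<bar> + e / 2 * \<bar>b N\<bar>"
  have "\<forall>\<^sub>F n in sequentially. b n > max 0 (2 * C / e)"
    using b_lim unfolding filterlim_at_top_dense by blast
  then show "\<forall>\<^sub>F n in sequentially. dist (a n / b n) L < e"
    using eventually_ge_at_top[of N]
  proof eventually_elim
    case (elim n)
    then have b_pos: "b n > 0" and C_small: "C < e / 2 * b n"
      using \<open>e > 0\<close> by (auto simp: field_simps)
    have "\<bar>a n - L * b n\<bar> \<le> \<bar>a n - a N - L * (b n - b N)\<bar> + \<bar>a N - L * b N\<bar>"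
      by (rule order_trans[OF _ abs_triangle_ineq]) (simp add: algebra_simps)
    moreover have "e / 2 * (b n - b N) \<le> e / 2 * b n + e / 2 * \<bar>b N\<bar>"
      using mult_left_mono[OF abs_ge_minus_self[of "b N"], of "e / 2"] \<open>e > 0\<close>
      by (simp add: algebra_simps)
    ultimately have "\<bar>a n - L * b n\<bar> < e * b n"
      using bound[OF elim(2)] C_small unfolding C_def by linarith
    then show ?case
      using b_pos by (simp add: dist_real_def abs_less_iff field_simps)
  qed
qed

lemma tendsto_div_powr_of_increments:
  fixes a :: "nat \<Rightarrow> real"
  assumes "p > 0"
    and increments: "(\<lambda>n. (a (Suc n) - a n) / real n powr (p - 1)) \<longlonglongrightarrow> c"
  shows "(\<lambda>n. a n / real n powr p) \<longlonglongrightarrow> c / p"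
proof (rule Stolz_Cesaro)
  show "real n powr p < real (Suc n) powr p" for n
    using \<open>p > 0\<close> by (intro powr_less_mono2) auto
  show "filterlim (\<lambda>n. real n powr p) at_top sequentially"
    using \<open>p > 0\<close> by real_asymp
  have "(\<lambda>n. real n powr (p - 1) / (real (Suc n) powr p - real n powr p)) \<longlonglongrightarrow> inverse p"
    using \<open>p > 0\<close> by real_asymp
  with increments have "(\<lambda>n. (a (Suc n) - a n) / real n powr (p - 1)
      * (real n powr (p - 1) / (real (Suc n) powr p - real n powr p))) \<longlonglongrightarrow> c / p"
    unfolding divide_inverse[of c] by (rule tendsto_mult)
  then show "(\<lambda>n. (a (Suc n) - a n) / (real (Suc n) powr p - real n powr p)) \<longlonglongrightarrow> c / p"
    by (rule Lim_transform_eventually) (use eventually_gt_at_top[of "0 :: nat"] in \<open>eventually_elim, simp\<close>)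
qed

lemma tendsto_Suc_div_powr:
  fixes f :: "nat \<Rightarrow> real"
  assumes "(\<lambda>n. f n / real n powr q) \<longlonglongrightarrow> c"
  shows "(\<lambda>n. f (Suc n) / real n powr q) \<longlonglongrightarrow> c"
proof -
  have "(\<lambda>n. real (Suc n) powr q / real n powr q) \<longlonglongrightarrow> 1"
    by real_asymp
  with LIMSEQ_Suc[OF assms] have "(\<lambda>n. f (Suc n) / real (Suc n) powr q
      * (real (Suc n) powr q / real n powr q)) \<longlonglongrightarrow> c * 1"
    by (rule tendsto_mult)
  then show ?thesis
    by simp
qed

lemma gbinomial_minus_half:
  "(real k - 1 / 2) gchoose k = fact (2 * k) / (4 ^ k * fact k ^ 2)"
proof -
  have "fact (2 * k) = 4 ^ k * pochhammer (1 / 2) k * (fact k :: real)"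
    using pochhammer_double[of "1 / 2 :: real" k] by (simp add: pochhammer_fact power_mult)
  then show ?thesis
    by (simp add: gbinomial_pochhammer' power2_eq_square)
qed

lemma central_binomial_asymptotic:
  "(\<lambda>k. fact (2 * k) / (4 ^ k * fact k ^ 2) * sqrt (real k)) \<longlonglongrightarrow> 1 / sqrt pi"
proof -
  have "(\<lambda>k. ((- 1 / 2 + real k) gchoose k) * exp (- (- 1 / 2) * ln (real k))) \<longlonglongrightarrow> rGamma (1 / 2)"
    using Gamma_gbinomial[of "- 1 / 2 :: real"] by simp
  also have "rGamma (1 / 2 :: real) = 1 / sqrt pi"
    by (simp only: rGamma_inverse_Gamma Gamma_one_half_real inverse_eq_divide)
  finally show ?thesis
  proof (rule Lim_transform_eventually)
    show "\<forall>\<^sub>F k in sequentially. ((- 1 / 2 + real k) gchoose k) * exp (- (- 1 / 2) * ln (real k))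
        = fact (2 * k) / (4 ^ k * fact k ^ 2) * sqrt (real k)"
      using eventually_gt_at_top[of "0 :: nat"]
    proof eventually_elim
      case (elim k)
      then have "exp (1 / 2 * ln (real k)) = sqrt (real k)"
        by (simp add: powr_def flip: powr_half_sqrt)
      then show ?case
        using gbinomial_minus_half[of k] by (simp add: add.commute)
    qed
  qed
qed

lemma fact_add_asymptotic: "(\<lambda>m. fact (m + j) / (fact m * real m ^ j)) \<longlonglongrightarrow> (1 :: real)"
proof -
  have "(\<lambda>m. fact j * (real ((j + m) choose m) / real (m ^ j))) \<longlonglongrightarrow> fact j * (1 / fact j :: real)"
    by (intro tendsto_mult tendsto_const fact_binomial_limit)
  moreover have "fact j * (real ((j + m) choose m) / real (m ^ j)) = fact (m + j) / (fact m * real m ^ j)" for m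
    by (simp add: binomial_fact add.commute)
  ultimately show ?thesis
    by simp
qed

(* For n = 0 the truncated index n - 1 is harmless: its coefficient 2n vanishes. *)
lemma hermite_poly_Suc:
  "hermite_poly (Suc n) = [:0, 2:] * hermite_poly n - smult (2 * real n) (hermite_poly (n - 1))"
  by (cases n) simp_all

lemma pderiv_hermite_poly: "pderiv (hermite_poly n) = smult (2 * real n) (hermite_poly (n - 1))"
proof (induction n rule: hermite_poly.induct)
  case (3 n)
  have "pderiv (hermite_poly (Suc (Suc n))) =
      smult 2 (hermite_poly (Suc n)) + [:0, 2:] * pderiv (hermite_poly (Suc n))
        - smult (2 * real (Suc n)) (pderiv (hermite_poly n))"
    by (subst hermite_poly.simps(3)) (simp add: pderiv_diff pderiv_mult pderiv_smult pderiv_pCons)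
  also have "\<dots> = smult 2 (hermite_poly (Suc n)) + smult (2 * real (Suc n))
      ([:0, 2:] * hermite_poly n - smult (2 * real n) (hermite_poly (n - 1)))"
    using 3 by (simp add: smult_diff_right)
  also have "\<dots> = smult (2 * real (Suc (Suc n))) (hermite_poly (Suc n))"
    unfolding hermite_poly_Suc[of n, symmetric] smult_add_left[symmetric] by simp
  finally show ?case by simp
qed (simp_all add: pderiv_pCons)

lemma higher_pderiv_hermite_poly:
  "j \<le> i \<Longrightarrow> (pderiv ^^ j) (hermite_poly i) = smult (2 ^ j * fact i / fact (i - j)) (hermite_poly (i - j))"
proof (induction j arbitrary: i)
  case (Suc j)
  then obtain i' where i: "i = Suc i'" "j \<le> i'" by (cases i) auto
  have "(pderiv ^^ Suc j) (hermite_poly i) = smult (2 * real i) ((pderiv ^^ j) (hermite_poly i'))"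
    by (simp only: funpow_Suc_right o_apply pderiv_hermite_poly higher_pderiv_smult) (simp add: i)
  also have "\<dots> = smult (2 ^ Suc j * fact i / fact (i - Suc j)) (hermite_poly (i - Suc j))"
    using Suc.IH[OF i(2)] by (simp add: i algebra_simps)
  finally show ?case .
qed simp

lemma higher_pderiv_hermite_poly_eq_0: "i < j \<Longrightarrow> (pderiv ^^ j) (hermite_poly i) = 0"
proof -
  assume "i < j"
  then obtain m where "j = Suc m + i" using less_iff_Suc_add by auto
  then show ?thesis
    by (simp only: funpow_add o_apply higher_pderiv_hermite_poly[OF order.refl])
      (simp add: higher_pderiv_smult funpow_Suc_right del: funpow.simps)
qed

lemma poly_hermite_poly_odd_0: "poly (hermite_poly (Suc (2 * k))) 0 = 0"
  by (induction k) simp_all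

lemma poly_hermite_poly_even_0: "poly (hermite_poly (2 * k)) 0 = (- 1) ^ k * fact (2 * k) / fact k"
proof (induction k)
  case (Suc k)
  have fact_double_Suc: "fact (2 * Suc k) = 2 * (real k + 1) * (2 * real k + 1) * (fact (2 * k) :: real)"
    by (simp add: numeral_2_eq_2 algebra_simps)
  have "poly (hermite_poly (2 * Suc k)) 0 = - 2 * (2 * real k + 1) * poly (hermite_poly (2 * k)) 0"
    by (simp add: numeral_2_eq_2 algebra_simps)
  also have "\<dots> = (- 1) ^ Suc k * fact (2 * Suc k) / fact (Suc k)"
    unfolding Suc.IH fact_double_Suc fact_Suc using fact_gt_zero[of k]
    by (simp add: field_simps add_nonneg_eq_0_iff)
  finally show ?case .
qed simp

lemma higher_pderiv_orthonormal_hermite_eq_0: "i < j \<Longrightarrow> (pderiv ^^ j) (orthonormal_hermite i) = 0"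
  by (simp add: orthonormal_hermite_def higher_pderiv_smult higher_pderiv_hermite_poly_eq_0)

lemma poly_higher_pderiv_orthonormal_hermite_odd_0:
  "poly ((pderiv ^^ j) (orthonormal_hermite (j + Suc (2 * k)))) 0 = 0"
  by (simp add: orthonormal_hermite_def higher_pderiv_smult higher_pderiv_hermite_poly
      poly_hermite_poly_odd_0)

lemma poly_higher_pderiv_orthonormal_hermite_even_0:
  "poly ((pderiv ^^ j) (orthonormal_hermite (j + 2 * k))) 0 ^ 2
     = 2 ^ j * fact (j + 2 * k) / (4 ^ k * fact k ^ 2 * sqrt pi)"
proof -
  define i where "i = j + 2 * k"
  have "poly ((pderiv ^^ j) (orthonormal_hermite i)) 0
      = 2 ^ j * fact i / fact (2 * k) * ((- 1) ^ k * fact (2 * k) / fact k) / sqrt (2 ^ i * fact i * sqrt pi)"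
    by (simp add: orthonormal_hermite_def higher_pderiv_smult higher_pderiv_hermite_poly
        poly_hermite_poly_even_0 i_def)
  also have "\<dots> = (- 1) ^ k * (2 ^ j * fact i / fact k) / sqrt (2 ^ i * fact i * sqrt pi)"
    by simp
  finally have "poly ((pderiv ^^ j) (orthonormal_hermite i)) 0 ^ 2
      = (2 ^ j * fact i / fact k) ^ 2 / (2 ^ i * fact i * sqrt pi)"
    by (simp add: power_divide power_mult_distrib flip: power_mult)
  also have "(2::real) ^ i = 2 ^ j * 4 ^ k"
    by (simp add: i_def power_add power_mult)
  finally show ?thesis
    by (simp add: i_def power2_eq_square field_simps)
qed

lemma poly_higher_pderiv_orthonormal_hermite_even_0_asymptotic:
  "(\<lambda>k. poly ((pderiv ^^ j) (orthonormal_hermite (j + 2 * k))) 0 ^ 2 / real k powr (real j - 1 / 2))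
     \<longlonglongrightarrow> 4 ^ j / pi"
proof -
  have "(\<lambda>k. fact (j + 2 * k) / (fact (2 * k) * real (2 * k) ^ j)) \<longlonglongrightarrow> (1 :: real)"
    using LIMSEQ_subseq_LIMSEQ[OF fact_add_asymptotic, of "\<lambda>k. 2 * k" j]
    by (simp add: strict_mono_def o_def add.commute)
  then have "(\<lambda>k. 4 ^ j / sqrt pi * (fact (j + 2 * k) / (fact (2 * k) * real (2 * k) ^ j))
        * (fact (2 * k) / (4 ^ k * fact k ^ 2) * sqrt (real k)))
      \<longlonglongrightarrow> 4 ^ j / sqrt pi * 1 * (1 / sqrt pi)"
    by (intro tendsto_intros central_binomial_asymptotic)
  also have "4 ^ j / sqrt pi * 1 * (1 / sqrt pi) = (4 ^ j / pi :: real)"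
    by (simp add: field_simps)
  finally show ?thesis
  proof (rule Lim_transform_eventually)
    show "\<forall>\<^sub>F k in sequentially. 4 ^ j / sqrt pi * (fact (j + 2 * k) / (fact (2 * k) * real (2 * k) ^ j))
        * (fact (2 * k) / (4 ^ k * fact k ^ 2) * sqrt (real k))
      = poly ((pderiv ^^ j) (orthonormal_hermite (j + 2 * k))) 0 ^ 2 / real k powr (real j - 1 / 2)"
      using eventually_gt_at_top[of "0 :: nat"]
    proof eventually_elim
      case (elim k)
      then have "real k powr (real j - 1 / 2) = real k ^ j / sqrt (real k)"
        by (simp add: powr_diff powr_realpow powr_half_sqrt)
      moreover have "(4 :: real) ^ j = 2 ^ j * 2 ^ j"
        by (simp flip: power_mult_distrib)
      ultimately show ?case
        unfolding poly_higher_pderiv_orthonormal_hermite_even_0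
        using elim by (simp add: field_simps)
    qed
  qed
qed

lemma kernel_jj0_odd_index:
  "kernel_jj0 j (j + 2 * i + 1) = (\<Sum>k\<le>i. poly ((pderiv ^^ j) (orthonormal_hermite (j + 2 * k))) 0 ^ 2)"
proof (induction i)
  case 0
  have "(\<Sum>t<j. poly ((pderiv ^^ j) (orthonormal_hermite t)) 0 ^ 2) = 0"
    by (simp add: higher_pderiv_orthonormal_hermite_eq_0)
  then show ?case
    using poly_higher_pderiv_orthonormal_hermite_odd_0[of j 0]
    by (simp add: kernel_jj0_def atLeast0AtMost lessThan_Suc_atMost[symmetric])
next
  case (Suc i)
  have "j + 2 * Suc i + 1 = Suc (Suc (j + 2 * i + 1))" by simp
  then show ?case
    using Suc.IH poly_higher_pderiv_orthonormal_hermite_odd_0[of j "Suc i"]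
    by (simp add: kernel_jj0_def atLeast0AtMost)
qed

lemma kernel_jj0_odd_index_asymptotic:
  "(\<lambda>i. kernel_jj0 j (j + 2 * i + 1) / real i powr (real j + 1 / 2))
     \<longlonglongrightarrow> 4 ^ j / (pi * (real j + 1 / 2))"
proof -
  have increment: "kernel_jj0 j (j + 2 * Suc i + 1) - kernel_jj0 j (j + 2 * i + 1)
      = poly ((pderiv ^^ j) (orthonormal_hermite (j + 2 * Suc i))) 0 ^ 2" for i
    unfolding kernel_jj0_odd_index by simp
  have "real j + 1 / 2 - 1 = real j - 1 / 2"
    by simp
  then have "(\<lambda>i. (kernel_jj0 j (j + 2 * Suc i + 1) - kernel_jj0 j (j + 2 * i + 1))
      / real i powr (real j + 1 / 2 - 1)) \<longlonglongrightarrow> 4 ^ j / pi"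
    unfolding increment
    by (simp only:) (rule tendsto_Suc_div_powr[OF poly_higher_pderiv_orthonormal_hermite_even_0_asymptotic])
  then have "(\<lambda>i. kernel_jj0 j (j + 2 * i + 1) / real i powr (real j + 1 / 2))
      \<longlonglongrightarrow> 4 ^ j / pi / (real j + 1 / 2)"
    by (rule tendsto_div_powr_of_increments[rotated]) simp
  then show ?thesis
    by (simp only: divide_divide_eq_left)
qed

lemma tilde_lambda_eq:
  "tilde_lambda M j n = 2 * real (j + 2 * n) + 4 * M * (\<Sum>i = 1..n. kernel_jj0 j (j + 2 * i - 1))"
proof -
  have "hermite_lambda (j + 2 * i) - hermite_lambda (j + 2 * i - 2) = 4" if "i \<in> {1..n}" for i
    using that by (simp add: hermite_lambda_def of_nat_diff)
  then show ?thesis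
    by (simp add: tilde_lambda_def hermite_lambda_def sum_distrib_left mult_ac)
qed

lemma tilde_lambda_asymptotic:
  "(\<lambda>n. tilde_lambda M j n / real n powr (real j + 3 / 2))
     \<longlonglongrightarrow> M * 4 ^ Suc j / (pi * (real j + 1 / 2) * (real j + 3 / 2))"
proof -
  define S where "S n = (\<Sum>i = 1..n. kernel_jj0 j (j + 2 * i - 1))" for n
  have increment: "S (Suc n) - S n = kernel_jj0 j (j + 2 * n + 1)" for n
    by (simp add: S_def)
  have "real j + 3 / 2 - 1 = real j + 1 / 2"
    by simp
  then have "(\<lambda>n. (S (Suc n) - S n) / real n powr (real j + 3 / 2 - 1))
      \<longlonglongrightarrow> 4 ^ j / (pi * (real j + 1 / 2))"
    unfolding increment by (simp only:) (rule kernel_jj0_odd_index_asymptotic)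
  then have S_lim: "(\<lambda>n. S n / real n powr (real j + 3 / 2))
      \<longlonglongrightarrow> 4 ^ j / (pi * (real j + 1 / 2)) / (real j + 3 / 2)"
    by (rule tendsto_div_powr_of_increments[rotated]) simp
  have "(\<lambda>n. 2 * real (j + 2 * n) / real n powr (real j + 3 / 2)) \<longlonglongrightarrow> 0"
    by real_asymp
  then have "(\<lambda>n. 2 * real (j + 2 * n) / real n powr (real j + 3 / 2)
      + 4 * M * (S n / real n powr (real j + 3 / 2)))
      \<longlonglongrightarrow> 0 + 4 * M * (4 ^ j / (pi * (real j + 1 / 2)) / (real j + 3 / 2))"
    by (intro tendsto_intros S_lim)
  moreover have "0 + 4 * M * (4 ^ j / (pi * (real j + 1 / 2)) / (real j + 3 / 2))
      = M * 4 ^ Suc j / (pi * (real j + 1 / 2) * (real j + 3 / 2))"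
    by simp
  moreover have "(\<lambda>n. tilde_lambda M j n / real n powr (real j + 3 / 2))
      = (\<lambda>n. 2 * real (j + 2 * n) / real n powr (real j + 3 / 2)
          + 4 * M * (S n / real n powr (real j + 3 / 2)))"
    by (simp add: tilde_lambda_eq S_def add_divide_distrib)
  ultimately show ?thesis
    by (simp only:)
qed

theorem mainTheorem7:
  fixes j :: nat and M :: real
  assumes "M > 0"
  shows "(\<forall>r. j = 2 * r \<longrightarrow>
            ((\<lambda>n. tilde_lambda M j n / real n powr (2 * real r + 3 / 2))
              \<longlongrightarrow> M * 2 ^ (4 * r + 1) / (pi * (real r + 3 / 4) * (2 * real r + 1 / 2))) sequentially)
       \<and> (\<forall>r. j = 2 * r + 1 \<longrightarrow>
            ((\<lambda>n. tilde_lambda M j n / real n powr (2 * real r + 5 / 2))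
              \<longlongrightarrow> M * 2 ^ (4 * r + 3) / (pi * (real r + 5 / 4) * (2 * real r + 3 / 2))) sequentially)"
proof (intro conjI allI impI)
  fix r
  assume j: "j = 2 * r"
  have "(4 :: real) ^ Suc j = 4 * 16 ^ r" and "(2 :: real) ^ (4 * r + 1) = 2 * 16 ^ r"
    using j by (simp_all add: power_add power_mult)
  then have "M * 4 ^ Suc j / (pi * (real j + 1 / 2) * (real j + 3 / 2))
      = M * 2 ^ (4 * r + 1) / (pi * (real r + 3 / 4) * (2 * real r + 1 / 2))"
    using j by (simp add: field_simps)
  moreover have "real j + 3 / 2 = 2 * real r + 3 / 2"
    using j by simp
  ultimately show "(\<lambda>n. tilde_lambda M j n / real n powr (2 * real r + 3 / 2))
      \<longlonglongrightarrow> M * 2 ^ (4 * r + 1) / (pi * (real r + 3 / 4) * (2 * real r + 1 / 2))"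
    using tilde_lambda_asymptotic[of M j] by (simp only:)
next
  fix r
  assume j: "j = 2 * r + 1"
  have "(4 :: real) ^ Suc j = 16 * 16 ^ r" and "(2 :: real) ^ (4 * r + 3) = 8 * 16 ^ r"
    using j by (simp_all add: power_add power_mult)
  then have "M * 4 ^ Suc j / (pi * (real j + 1 / 2) * (real j + 3 / 2))
      = M * 2 ^ (4 * r + 3) / (pi * (real r + 5 / 4) * (2 * real r + 3 / 2))"
    using j by (simp add: field_simps)
  moreover have "real j + 3 / 2 = 2 * real r + 5 / 2"
    using j by simp
  ultimately show "(\<lambda>n. tilde_lambda M j n / real n powr (2 * real r + 5 / 2))
      \<longlonglongrightarrow> M * 2 ^ (4 * r + 3) / (pi * (real r + 5 / 4) * (2 * real r + 3 / 2))"
    using tilde_lambda_asymptotic[of M j] by (simp only:)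
qed

end
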